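(* Let $q$ be a prime power. Let $C_1=[n,k_1,d_1]_q$, $C_2=[n,k_2,d_2]_q$ be linear codes over $\mathbb{F}_q$ with $C_2\subset C_1$ (giving via CSS an asymmetric stabilizer code $[[n,k^{*},d_z^{*}/d_x^{*}]]_q$, $k^{*}=k_1-k_2$, $d_z^{*}\geq d_1$, $d_x^{*}\geq d_2^{\perp}$), and let $C_3=[n,k_3,d_3]_q$, $C_4=[n,k_4,d_4]_q$ be linear codes over $\mathbb{F}_q$ with $C_4\subset C_3$ (giving an asymmetric stabilizer code $[[n,k^{\diamond},d_z^{\diamond}/d_x^{\diamond}]]_q$, $k^{\diamond}=k_3-k_4$, $d_z^{\diamond}\geq d_3$, $d_x^{\diamond}\geq d_4^{\perp}$), where $d_2^{\perp}$ and $d_4^{\perp}$ are the minimum distances of the Euclidean duals $C_2^{\perp}$ and $C_4^{\perp}$. Then there exists an AQECC $[[2n,k^{*}+k^{\diamond},d_z/d_x]]_q$ with $d_z\geq\min\{2d_1,d_3\}$ and $d_x\geq\min\{2d_4^{\perp},d_2^{\perp}\}$.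
   Context: An AQECC $[[n,k,d_z/d_x]]_q$ is a $q^k$-dimensional subspace of $\mathbb{C}^{q^n}$ correcting all qudit-flip errors up to $\lfloor (d_x-1)/2\rfloor$ and all phase-shift errors up to $\lfloor (d_z-1)/2\rfloor$. CSS construction: if $C_2\subset C_1\subseteq\mathbb{F}_q^n$ are linear of dimensions $k_2<k_1$, there is an AQECC $[[n,k_1-k_2,d_z/d_x]]_q$ with $d_z=\mathrm{wt}(C_1\setminus C_2)$, $d_x=\mathrm{wt}(C_2^{\perp}\setminus C_1^{\perp})$. *)

theory Defs
  imports "HOL-Analysis.Analysis" "HOL-Library.Function_Algebras"
begin

text \<open>The finite field F_q is a type 'a of class finite and field, q = CARD('a).
  A word of length n is a function nat => 'a vanishing outside {0..<n}.\<close>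

definition vscale :: "'a::field \<Rightarrow> (nat \<Rightarrow> 'a) \<Rightarrow> (nat \<Rightarrow> 'a)" where
  "vscale c v = (\<lambda>i. c * v i)"

definition words :: "nat \<Rightarrow> (nat \<Rightarrow> 'a::zero) set" where
  "words n = {v. \<forall>i\<ge>n. v i = 0}"

definition wt :: "(nat \<Rightarrow> 'a::zero) \<Rightarrow> nat" where
  "wt v = card {i. v i \<noteq> 0}"

definition linear_code :: "nat \<Rightarrow> (nat \<Rightarrow> 'a::field) set \<Rightarrow> bool" where
  "linear_code n C \<longleftrightarrow> C \<subseteq> words n \<and> module.subspace vscale C"

definition code_dim :: "(nat \<Rightarrow> 'a::field) set \<Rightarrow> nat" where
  "code_dim C = vector_space.dim vscale C"

definition min_dist :: "(nat \<Rightarrow> 'a::zero) set \<Rightarrow> nat" where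
  "min_dist C = Min (wt ` (C - {0}))"

definition dotp :: "nat \<Rightarrow> (nat \<Rightarrow> 'a::comm_ring) \<Rightarrow> (nat \<Rightarrow> 'a) \<Rightarrow> 'a" where
  "dotp n u v = (\<Sum>i<n. u i * v i)"

definition dual :: "nat \<Rightarrow> (nat \<Rightarrow> 'a::field) set \<Rightarrow> (nat \<Rightarrow> 'a) set" where
  "dual n C = {v \<in> words n. \<forall>u\<in>C. dotp n u v = 0}"

text \<open>A fixed nontrivial additive character chi of F_q (e.g. chi(x) = omega^(tr x),
  omega a primitive p-th root of unity); the set of errors below does not depend on the choice.\<close>

definition add_char :: "('a::field \<Rightarrow> complex) \<Rightarrow> bool" where
  "add_char ch \<longleftrightarrow> (\<forall>x y. ch (x + y) = ch x * ch y) \<and> (\<forall>x. cmod (ch x) = 1) \<and> (\<exists>x. ch x \<noteq> 1)"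

definition chi :: "'a::field \<Rightarrow> complex" where
  "chi = (SOME ch. add_char ch)"

text \<open>The Hilbert space C^(q^n): complex functions on the words of length n,
  with computational basis |v>, v in words n.\<close>

definition cscale :: "complex \<Rightarrow> ((nat \<Rightarrow> 'a) \<Rightarrow> complex) \<Rightarrow> ((nat \<Rightarrow> 'a) \<Rightarrow> complex)" where
  "cscale c f = (\<lambda>v. c * f v)"

definition hspace :: "nat \<Rightarrow> ((nat \<Rightarrow> 'a::zero) \<Rightarrow> complex) set" where
  "hspace n = {f. \<forall>v. v \<notin> words n \<longrightarrow> f v = 0}"

definition cinner :: "nat \<Rightarrow> ((nat \<Rightarrow> 'a::zero) \<Rightarrow> complex) \<Rightarrow> ((nat \<Rightarrow> 'a) \<Rightarrow> complex) \<Rightarrow> complex" where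
  "cinner n f g = (\<Sum>v\<in>words n. cnj (f v) * g v)"

definition Xop :: "(nat \<Rightarrow> 'a::ab_group_add) \<Rightarrow> ((nat \<Rightarrow> 'a) \<Rightarrow> complex) \<Rightarrow> ((nat \<Rightarrow> 'a) \<Rightarrow> complex)" where
  "Xop a f = (\<lambda>v. f (v - a))"

definition Zop :: "nat \<Rightarrow> (nat \<Rightarrow> 'a::field) \<Rightarrow> ((nat \<Rightarrow> 'a) \<Rightarrow> complex) \<Rightarrow> ((nat \<Rightarrow> 'a) \<Rightarrow> complex)" where
  "Zop n b f = (\<lambda>v. chi (dotp n b v) * f v)"

definition errors :: "nat \<Rightarrow> nat \<Rightarrow> nat \<Rightarrow>
    (((nat \<Rightarrow> 'a::field) \<Rightarrow> complex) \<Rightarrow> ((nat \<Rightarrow> 'a) \<Rightarrow> complex)) set" where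
  "errors n tx tz = {(\<lambda>f. Xop a (Zop n b f)) | a b.
      a \<in> words n \<and> b \<in> words n \<and> wt a \<le> tx \<and> wt b \<le> tz}"

text \<open>Knill--Laflamme error-correction condition: Q corrects E iff for all E1, E2 in E
  there is c with <E1 u, E2 w> = c <u, w> for all u, w in Q (i.e. P E1^dag E2 P = c P).\<close>
definition corrects :: "nat \<Rightarrow> ((nat \<Rightarrow> 'a::zero) \<Rightarrow> complex) set \<Rightarrow>
    ((((nat \<Rightarrow> 'a) \<Rightarrow> complex) \<Rightarrow> ((nat \<Rightarrow> 'a) \<Rightarrow> complex)) set) \<Rightarrow> bool" where
  "corrects n Q E \<longleftrightarrow> (\<forall>e1\<in>E. \<forall>e2\<in>E. \<exists>c. \<forall>u\<in>Q. \<forall>w\<in>Q.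
      cinner n (e1 u) (e2 w) = c * cinner n u w)"

definition is_AQECC :: "nat \<Rightarrow> nat \<Rightarrow> nat \<Rightarrow> nat \<Rightarrow> ((nat \<Rightarrow> 'a::{finite,field}) \<Rightarrow> complex) set \<Rightarrow> bool" where
  "is_AQECC n k dz dx Q \<longleftrightarrow>
     Q \<subseteq> hspace n \<and> module.subspace cscale Q \<and>
     vector_space.dim cscale Q = CARD('a) ^ k \<and>
     corrects n Q (errors n ((dx - 1) div 2) ((dz - 1) div 2))"

end

theory Submission
  imports Defs
begin

text \<open>Stacking the two CSS pairs with the \<open>(u | u + v)\<close> construction gives nested codes
  \<open>S = (C\<^sub>2 | C\<^sub>2 + C\<^sub>4) \<subseteq> D = (C\<^sub>1 | C\<^sub>1 + C\<^sub>3)\<close> of length \<open>2n\<close> and dimensions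
  \<open>k\<^sub>2 + k\<^sub>4 \<le> k\<^sub>1 + k\<^sub>3\<close>. A nonzero word of \<open>D\<close> has weight at least \<open>min (2 d\<^sub>1) d\<^sub>3\<close>,
  and a nonzero word \<open>(x | y)\<close> of \<open>S\<^sup>\<perp>\<close> has \<open>y \<in> C\<^sub>4\<^sup>\<perp>\<close> and \<open>x + y \<in> C\<^sub>2\<^sup>\<perp>\<close>, hence weight at
  least \<open>min (2 d\<^sub>4\<^sup>\<perp>) d\<^sub>2\<^sup>\<perp>\<close>. The CSS construction for \<open>S \<subseteq> D\<close> is carried out directly: the
  functions supported on \<open>S\<^sup>\<perp>\<close> and constant on the cosets of \<open>D\<^sup>\<perp>\<close> form a space of dimension
  \<open>|S\<^sup>\<perp>| / |D\<^sup>\<perp>| = q\<^bsup>dim D - dim S\<^esup>\<close>, and orthogonality of a nontrivial additive character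
  of \<open>F\<^sub>q\<close> gives the Knill--Laflamme conditions for all errors of weight below half the
  distances.\<close>

section \<open>Words, weights and linear codes\<close>

lemma vector_space_vscale: "vector_space (vscale :: 'a::field \<Rightarrow> (nat \<Rightarrow> 'a) \<Rightarrow> _)"
  by unfold_locales (auto simp: vscale_def fun_eq_iff algebra_simps)

lemma vector_space_cscale: "vector_space (cscale :: complex \<Rightarrow> ((nat \<Rightarrow> 'a) \<Rightarrow> complex) \<Rightarrow> _)"
  by unfold_locales (auto simp: cscale_def fun_eq_iff algebra_simps)

lemma vscale_subspace_iff:
  "module.subspace (vscale :: 'a::field \<Rightarrow> _) S \<longleftrightarrow>
     0 \<in> S \<and> (\<forall>x\<in>S. \<forall>y\<in>S. x + y \<in> S) \<and> (\<forall>c. \<forall>x\<in>S. vscale c x \<in> S)"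
proof -
  have "module (vscale :: 'a \<Rightarrow> _)" using vector_space_vscale by (simp add: module_iff_vector_space)
  then show ?thesis by (simp add: module.subspace_def)
qed

lemma cscale_subspace_iff:
  "module.subspace (cscale :: complex \<Rightarrow> ((nat \<Rightarrow> 'a) \<Rightarrow> complex) \<Rightarrow> _) S \<longleftrightarrow>
     0 \<in> S \<and> (\<forall>x\<in>S. \<forall>y\<in>S. x + y \<in> S) \<and> (\<forall>c. \<forall>x\<in>S. cscale c x \<in> S)"
proof -
  have "module (cscale :: complex \<Rightarrow> ((nat \<Rightarrow> 'a) \<Rightarrow> complex) \<Rightarrow> _)"
    using vector_space_cscale by (simp add: module_iff_vector_space)
  then show ?thesis by (simp add: module.subspace_def)
qed

lemma vscale_minus_one [simp]: "vscale (-1) x = - x"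
  by (simp add: vscale_def fun_eq_iff)

lemma linear_code_zero: "linear_code n C \<Longrightarrow> 0 \<in> C"
  by (simp add: linear_code_def vscale_subspace_iff)

lemma linear_code_add: "linear_code n C \<Longrightarrow> x \<in> C \<Longrightarrow> y \<in> C \<Longrightarrow> x + y \<in> C"
  by (simp add: linear_code_def vscale_subspace_iff)

lemma linear_code_scale: "linear_code n C \<Longrightarrow> x \<in> C \<Longrightarrow> vscale c x \<in> C"
  by (simp add: linear_code_def vscale_subspace_iff)

lemma linear_code_uminus: "linear_code n C \<Longrightarrow> x \<in> C \<Longrightarrow> - x \<in> C"
  using linear_code_scale[of n C x "-1"] by simp

lemma linear_code_diff: "linear_code n C \<Longrightarrow> x \<in> C \<Longrightarrow> y \<in> C \<Longrightarrow> x - y \<in> C"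
  using linear_code_add[of n C x "- y"] linear_code_uminus[of n C y] by simp

lemma linear_code_words: "linear_code n C \<Longrightarrow> C \<subseteq> words n"
  by (simp add: linear_code_def)

lemma words_add: "x \<in> words n \<Longrightarrow> y \<in> words n \<Longrightarrow> x + y \<in> words n"
  for x y :: "nat \<Rightarrow> 'a::ab_group_add"
  by (simp add: words_def)

lemma words_diff: "x \<in> words n \<Longrightarrow> y \<in> words n \<Longrightarrow> x - y \<in> words n"
  for x y :: "nat \<Rightarrow> 'a::ab_group_add"
  by (simp add: words_def)

lemma linear_code_all_words: "linear_code n (words n :: (nat \<Rightarrow> 'a::field) set)"
  by (auto simp: linear_code_def vscale_subspace_iff words_def vscale_def)

lemma bij_betw_PiE_words:
  "bij_betw (\<lambda>f i. if i < n then f i else 0) ({..<n} \<rightarrow>\<^sub>E (UNIV :: 'a::zero set)) (words n)"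
proof (rule bij_betwI[where g = "\<lambda>v. restrict v {..<n}"])
  show "(\<lambda>f i. if i < n then f i else 0) \<in> ({..<n} \<rightarrow>\<^sub>E UNIV) \<rightarrow> words n"
    by (auto simp: words_def)
  show "restrict (\<lambda>i. if i < n then f i else 0) {..<n} = f" if "f \<in> {..<n} \<rightarrow>\<^sub>E UNIV" for f
    using that by (auto simp: fun_eq_iff PiE_def extensional_def)
  show "(\<lambda>i. if i < n then restrict v {..<n} i else 0) = v" if "v \<in> words n" for v :: "nat \<Rightarrow> 'a"
    using that by (auto simp: fun_eq_iff words_def)
qed auto

lemma finite_words [simp]: "finite (words n :: (nat \<Rightarrow> 'a::{finite,zero}) set)"
  using bij_betw_finite[OF bij_betw_PiE_words[of n, where 'a='a]] by (simp add: finite_PiE)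

lemma card_words: "card (words n :: (nat \<Rightarrow> 'a::{finite,zero}) set) = CARD('a) ^ n"
  using bij_betw_same_card[OF bij_betw_PiE_words[of n, where 'a='a]] by (simp add: card_PiE)

lemma finite_support: "v \<in> words n \<Longrightarrow> finite {i. v i \<noteq> 0}"
  by (rule finite_subset[of _ "{..<n}"]) (auto simp: words_def, meson not_le)

lemma wt_eq_0_iff: "v \<in> words n \<Longrightarrow> wt v = 0 \<longleftrightarrow> v = 0"
  using finite_support[of v n] by (auto simp: wt_def fun_eq_iff)

lemma wt_uminus [simp]: "wt (- v) = wt (v :: nat \<Rightarrow> 'a::ab_group_add)"
  by (simp add: wt_def)

lemma wt_add_le:
  assumes "x \<in> words n" "y \<in> words n"
  shows "wt (x + y) \<le> wt x + wt (y :: nat \<Rightarrow> 'a::ab_group_add)"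
proof -
  have "{i. (x + y) i \<noteq> 0} \<subseteq> {i. x i \<noteq> 0} \<union> {i. y i \<noteq> 0}" by auto
  then have "card {i. (x + y) i \<noteq> 0} \<le> card ({i. x i \<noteq> 0} \<union> {i. y i \<noteq> 0})"
    using finite_support[OF assms(1)] finite_support[OF assms(2)] by (intro card_mono) auto
  also have "\<dots> \<le> card {i. x i \<noteq> 0} + card {i. y i \<noteq> 0}" by (rule card_Un_le)
  finally show ?thesis unfolding wt_def .
qed

lemma wt_diff_le:
  "x \<in> words n \<Longrightarrow> y \<in> words n \<Longrightarrow> wt (x - y) \<le> wt x + wt (y :: nat \<Rightarrow> 'a::ab_group_add)"
  using wt_add_le[of x n "- y"] by (simp add: words_def)

lemma min_dist_le_wt: "finite C \<Longrightarrow> x \<in> C \<Longrightarrow> x \<noteq> 0 \<Longrightarrow> min_dist C \<le> wt x"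
  unfolding min_dist_def by (intro Min_le) auto

lemma card_span_independent:
  fixes B :: "(nat \<Rightarrow> 'a::{finite,field}) set"
  assumes fin: "finite B" and ind: "\<not> module.dependent vscale B"
  shows "card (module.span vscale B) = CARD('a) ^ card B"
proof -
  interpret v: vector_space "vscale :: 'a \<Rightarrow> (nat \<Rightarrow> 'a) \<Rightarrow> _" by (rule vector_space_vscale)
  let ?comb = "\<lambda>g. \<Sum>b\<in>B. vscale (g b) b"
  have "inj_on ?comb (B \<rightarrow>\<^sub>E UNIV)"
  proof (rule inj_onI)
    fix g g' assume g: "g \<in> B \<rightarrow>\<^sub>E UNIV" and g': "g' \<in> B \<rightarrow>\<^sub>E UNIV" and eq: "?comb g = ?comb g'"
    have "(\<Sum>b\<in>B. vscale (g b - g' b) b) = ?comb g - ?comb g'"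
      by (simp add: v.scale_left_diff_distrib sum_subtractf)
    then have zero: "(\<Sum>b\<in>B. vscale (g b - g' b) b) = 0" using eq by simp
    have "\<forall>b\<in>B. g b - g' b = 0"
    proof (rule ccontr)
      assume "\<not> (\<forall>b\<in>B. g b - g' b = 0)"
      then have "v.dependent B" unfolding v.dependent_finite[OF fin]
        using zero by (intro exI[of _ "\<lambda>b. g b - g' b"]) auto
      with ind show False by simp
    qed
    then show "g = g'" using g g' by (auto simp: fun_eq_iff PiE_def extensional_def)
  qed
  moreover have "?comb ` (B \<rightarrow>\<^sub>E UNIV) = v.span B"
  proof
    show "?comb ` (B \<rightarrow>\<^sub>E UNIV) \<subseteq> v.span B" using v.span_finite[OF fin] by auto
    show "v.span B \<subseteq> ?comb ` (B \<rightarrow>\<^sub>E UNIV)"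
    proof
      fix x assume "x \<in> v.span B"
      then obtain u where x: "x = ?comb u" using v.span_finite[OF fin] by auto
      have "x = ?comb (restrict u B)" unfolding x by (rule sum.cong) auto
      moreover have "restrict u B \<in> B \<rightarrow>\<^sub>E UNIV" by simp
      ultimately show "x \<in> ?comb ` (B \<rightarrow>\<^sub>E UNIV)" by blast
    qed
  qed
  ultimately have "bij_betw ?comb (B \<rightarrow>\<^sub>E UNIV) (v.span B)" by (rule bij_betw_imageI)
  from bij_betw_same_card[OF this] show ?thesis by (simp add: card_PiE[OF fin])
qed

lemma finite_linear_code: "linear_code n (C :: (nat \<Rightarrow> 'a::{finite,field}) set) \<Longrightarrow> finite C"
  using finite_subset[OF linear_code_words finite_words] by blast

lemma card_linear_code:
  fixes C :: "(nat \<Rightarrow> 'a::{finite,field}) set"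
  assumes "linear_code n C"
  shows "card C = CARD('a) ^ code_dim C"
proof -
  interpret v: vector_space "vscale :: 'a \<Rightarrow> (nat \<Rightarrow> 'a) \<Rightarrow> _" by (rule vector_space_vscale)
  obtain B where B: "B \<subseteq> C" "v.independent B" "C \<subseteq> v.span B" "card B = v.dim C"
    by (rule v.basis_exists)
  have "v.span B = C"
    using assms B by (intro v.span_subspace) (auto simp: linear_code_def)
  moreover have "finite B" using B(1) finite_linear_code[OF assms] finite_subset by blast
  ultimately show ?thesis using card_span_independent[of B] B by (simp add: code_dim_def)
qed

lemma one_less_card_field: "1 < CARD('a::{finite,field})"
proof -
  have "card {0::'a, 1} \<le> CARD('a)" by (rule card_mono) auto
  then show ?thesis by simp
qed

lemma code_dim_eq_iff_card:
  fixes C :: "(nat \<Rightarrow> 'a::{finite,field}) set"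
  assumes "linear_code n C"
  shows "code_dim C = k \<longleftrightarrow> card C = CARD('a) ^ k"
  using card_linear_code[OF assms] one_less_card_field[where 'a='a] by simp

lemma code_dim_mono:
  fixes C C' :: "(nat \<Rightarrow> 'a::{finite,field}) set"
  assumes "linear_code n C" "linear_code n C'" "C' \<subseteq> C"
  shows "code_dim C' \<le> code_dim C"
proof -
  have "CARD('a) ^ code_dim C' \<le> CARD('a) ^ code_dim C"
    using card_mono[OF finite_linear_code[OF assms(1)] assms(3)]
    by (simp add: card_linear_code[OF assms(1)] card_linear_code[OF assms(2)])
  then show ?thesis using one_less_card_field[where 'a='a] by simp
qed

section \<open>A nontrivial additive character\<close>

definition add_subgroup :: "'a::ab_group_add set \<Rightarrow> bool" where
  "add_subgroup H \<longleftrightarrow> 0 \<in> H \<and> (\<forall>x\<in>H. \<forall>y\<in>H. x + y \<in> H) \<and> (\<forall>x\<in>H. - x \<in> H)"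

lemma add_subgroup_diff: "add_subgroup H \<Longrightarrow> x \<in> H \<Longrightarrow> y \<in> H \<Longrightarrow> x - y \<in> H"
  unfolding add_subgroup_def by (metis diff_conv_add_uminus)

lemma add_subgroup_of_int_mult:
  assumes "add_subgroup H" "h \<in> H"
  shows "of_int z * (h :: 'a::ring_1) \<in> H"
proof -
  have nat_mult: "of_nat k * h \<in> H" for k
    using assms by (induction k) (auto simp: add_subgroup_def algebra_simps)
  show ?thesis
  proof (cases "z \<ge> 0")
    case True
    then show ?thesis using nat_mult[of "nat z"] by simp
  next
    case False
    then show ?thesis using nat_mult[of "nat (- z)"] assms(1) by (auto simp: add_subgroup_def)
  qed
qed

lemma exists_maximal_add_subgroup:
  obtains H :: "'a::{finite,field} set"
  where "add_subgroup H" "H \<noteq> UNIV" "\<And>H'. add_subgroup H' \<Longrightarrow> H \<subset> H' \<Longrightarrow> H' = UNIV"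
proof -
  let ?F = "{H :: 'a set. add_subgroup H \<and> H \<noteq> UNIV}"
  have "(1::'a) \<notin> {0}" by simp
  then have "{0::'a} \<noteq> UNIV" by blast
  then have "{0} \<in> ?F" by (simp add: add_subgroup_def)
  moreover have "finite ?F" by simp
  ultimately obtain H where H: "H \<in> ?F" and max: "\<And>H'. H' \<in> ?F \<Longrightarrow> H \<subseteq> H' \<Longrightarrow> H = H'"
    using finite_has_maximal[of ?F] by blast
  show ?thesis
  proof (rule that)
    show "add_subgroup H" "H \<noteq> UNIV" using H by simp_all
    show "H' = UNIV" if "add_subgroup H'" "H \<subset> H'" for H'
      using max[of H'] that by blast
  qed
qed

lemma prime_CHAR: "prime CHAR('a::{finite,field})"
  using prime_CHAR_semidom[where 'a='a] finite_imp_CHAR_pos[where 'a='a] by simp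

lemma add_subgroup_of_int_mult_dvd:
  fixes g :: "'a::{finite,field}"
  assumes H: "add_subgroup H" and g: "g \<notin> H" and "of_int z * g \<in> H"
  shows "int CHAR('a) dvd z"
proof (rule ccontr)
  let ?p = "CHAR('a)"
  assume "\<not> int ?p dvd z"
  then have "coprime (int ?p) z" using prime_CHAR[where 'a='a] by (simp add: prime_imp_coprime)
  then obtain u v where uv: "u * int ?p + v * z = 1" using bezout_int[of "int ?p" z] by auto
  have "(of_int v * of_int z :: 'a) = of_int (u * int ?p + v * z)" by simp
  then have "(of_int v * of_int z :: 'a) = 1" by (simp only: uv) simp
  then have "g = of_int v * (of_int z * g)" by (simp add: mult.assoc[symmetric])
  also have "\<dots> \<in> H" using add_subgroup_of_int_mult[OF H assms(3)] by simp
  finally show False using g by simp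
qed

lemma add_subgroup_coordinate_unique:
  fixes g :: "'a::{finite,field}"
  assumes H: "add_subgroup H" and g: "g \<notin> H"
    and eq: "of_nat k * g + h = of_nat k' * g + h'" and "h \<in> H" "h' \<in> H"
  shows "k mod CHAR('a) = k' mod CHAR('a)"
proof -
  have "of_int (int k - int k') * g = h' - h" using eq by (simp add: algebra_simps)
  also have "\<dots> \<in> H" using add_subgroup_diff[OF H assms(5,4)] .
  finally have "int CHAR('a) dvd int k - int k'" by (rule add_subgroup_of_int_mult_dvd[OF H g])
  then have "int k mod int CHAR('a) = int k' mod int CHAR('a)" by (simp add: mod_eq_dvd_iff)
  then show ?thesis by (metis of_nat_eq_iff zmod_int)
qed

text \<open>\<open>H + \<nat> g\<close> is a subgroup since \<open>-g = (p - 1) g\<close> in characteristic \<open>p\<close>.\<close>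

lemma maximal_add_subgroup_decomposition:
  fixes g :: "'a::{finite,field}"
  assumes H: "add_subgroup H" and g: "g \<notin> H"
    and maximal: "\<And>H'. add_subgroup H' \<Longrightarrow> H \<subset> H' \<Longrightarrow> H' = UNIV"
  shows "\<exists>k. \<exists>h\<in>H. x = of_nat k * g + h"
proof -
  let ?p = "CHAR('a)"
  define H' where "H' = {of_nat k * g + h | k h. h \<in> H}"
  have "add_subgroup H'"
    unfolding add_subgroup_def
  proof (intro conjI ballI)
    show "0 \<in> H'" unfolding H'_def using H by (auto simp: add_subgroup_def intro!: exI[of _ 0])
  next
    fix x y assume "x \<in> H'" "y \<in> H'"
    then obtain k h k' h' where x: "x = of_nat k * g + h" "h \<in> H" and y: "y = of_nat k' * g + h'" "h' \<in> H"
      unfolding H'_def by auto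
    have "x + y = of_nat (k + k') * g + (h + h')" using x y by (simp add: algebra_simps)
    moreover have "h + h' \<in> H" using H x y by (simp add: add_subgroup_def)
    ultimately show "x + y \<in> H'" unfolding H'_def by blast
  next
    fix x assume "x \<in> H'"
    then obtain k h where x: "x = of_nat k * g + h" "h \<in> H" unfolding H'_def by auto
    have "(of_nat (k * (?p - 1)) :: 'a) = of_nat k * (of_nat ?p - 1)"
      using prime_gt_0_nat[OF prime_CHAR[where 'a='a]] by (simp add: of_nat_diff)
    then have "- x = of_nat (k * (?p - 1)) * g + (- h)" using x by (simp add: algebra_simps)
    moreover have "- h \<in> H" using H x by (simp add: add_subgroup_def)
    ultimately show "- x \<in> H'" unfolding H'_def by blast
  qed
  moreover have "H \<subset> H'"
  proof
    show "H \<subseteq> H'"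
    proof
      fix x assume "x \<in> H"
      then show "x \<in> H'" unfolding H'_def by (intro CollectI exI[of _ "0::nat"] exI[of _ x]) simp
    qed
    have "g \<in> H'" unfolding H'_def using H
      by (intro CollectI exI[of _ "1::nat"] exI[of _ "0::'a"]) (simp add: add_subgroup_def)
    then show "H \<noteq> H'" using g by auto
  qed
  ultimately have "H' = UNIV" by (rule maximal)
  then have "x \<in> H'" by simp
  then show ?thesis unfolding H'_def by auto
qed

text \<open>Modulo \<open>CHAR('a)\<close>, \<open>\<kappa> x\<close> is the coordinate of \<open>x\<close> in the cyclic quotient of \<open>(F, +)\<close> by a
  maximal proper subgroup.\<close>

lemma exists_additive_coordinate:
  obtains \<kappa> :: "'a::{finite,field} \<Rightarrow> nat" and g :: 'a
  where "\<And>x y. \<kappa> (x + y) mod CHAR('a) = (\<kappa> x + \<kappa> y) mod CHAR('a)"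
    and "\<kappa> g mod CHAR('a) \<noteq> 0"
proof -
  obtain H :: "'a set" where H: "add_subgroup H" "H \<noteq> UNIV"
    and maximal: "\<And>H'. add_subgroup H' \<Longrightarrow> H \<subset> H' \<Longrightarrow> H' = UNIV"
    using exists_maximal_add_subgroup[where 'a='a] by blast
  obtain g where g: "g \<notin> H" using H(2) by auto
  define \<kappa> where "\<kappa> x = (SOME k. \<exists>h\<in>H. x = of_nat k * g + h)" for x
  have \<kappa>: "\<exists>h\<in>H. x = of_nat (\<kappa> x) * g + h" for x
    unfolding \<kappa>_def using maximal_add_subgroup_decomposition[OF H(1) g maximal] by (rule someI_ex)
  note unique = add_subgroup_coordinate_unique[OF H(1) g]
  show ?thesis
  proof
    fix x y
    obtain h where h: "h \<in> H" "x = of_nat (\<kappa> x) * g + h" using \<kappa> by blast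
    obtain h' where h': "h' \<in> H" "y = of_nat (\<kappa> y) * g + h'" using \<kappa> by blast
    obtain h'' where h'': "h'' \<in> H" "x + y = of_nat (\<kappa> (x + y)) * g + h''" using \<kappa> by blast
    have "of_nat (\<kappa> (x + y)) * g + h'' = (of_nat (\<kappa> x) * g + h) + (of_nat (\<kappa> y) * g + h')"
      using h(2) h'(2) h''(2) by simp
    also have "\<dots> = of_nat (\<kappa> x + \<kappa> y) * g + (h + h')" by (simp add: algebra_simps)
    finally have "of_nat (\<kappa> (x + y)) * g + h'' = of_nat (\<kappa> x + \<kappa> y) * g + (h + h')" .
    moreover have "h + h' \<in> H" using H(1) h(1) h'(1) by (simp add: add_subgroup_def)
    ultimately show "\<kappa> (x + y) mod CHAR('a) = (\<kappa> x + \<kappa> y) mod CHAR('a)"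
      using unique h''(1) by blast
  next
    obtain h where h: "h \<in> H" "of_nat (\<kappa> g) * g + h = of_nat 1 * g + 0" using \<kappa>[of g] by auto
    have "\<kappa> g mod CHAR('a) = 1 mod CHAR('a)"
      using unique[OF h(2) h(1)] H(1) by (simp add: add_subgroup_def)
    then show "\<kappa> g mod CHAR('a) \<noteq> 0" using prime_gt_1_nat[OF prime_CHAR[where 'a='a]] by simp
  qed
qed

lemma exists_add_char: "\<exists>ch :: 'a::{finite,field} \<Rightarrow> complex. add_char ch"
proof -
  let ?p = "CHAR('a)"
  obtain \<kappa> :: "'a \<Rightarrow> nat" and g where
    hom: "\<And>x y. \<kappa> (x + y) mod ?p = (\<kappa> x + \<kappa> y) mod ?p" and nontriv: "\<kappa> g mod ?p \<noteq> 0"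
    using exists_additive_coordinate[where 'a='a] by blast
  have p: "1 \<le> ?p" using finite_imp_CHAR_pos[where 'a='a] by simp
  define e where "e k = exp (2 * of_real pi * \<i> * of_nat k / of_nat ?p)" for k
  have e_eq: "e j = e k \<longleftrightarrow> j mod ?p = k mod ?p" for j k
    unfolding e_def using complex_root_unity_eq[OF p] .
  have "add_char (e \<circ> \<kappa>)"
    unfolding add_char_def
  proof (intro conjI allI exI)
    fix x y
    have "e (\<kappa> (x + y)) = e (\<kappa> x + \<kappa> y)" using e_eq hom by blast
    then show "(e \<circ> \<kappa>) (x + y) = (e \<circ> \<kappa>) x * (e \<circ> \<kappa>) y"
      by (simp add: e_def add_divide_distrib distrib_left exp_add)
  next
    fix x show "cmod ((e \<circ> \<kappa>) x) = 1" by (simp add: e_def)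
  next
    have "e (\<kappa> g) \<noteq> e 0" using e_eq nontriv by simp
    then show "(e \<circ> \<kappa>) g \<noteq> 1" by (simp add: e_def)
  qed
  then show ?thesis by blast
qed

lemma add_char_chi: "add_char (chi :: 'a::{finite,field} \<Rightarrow> complex)"
  unfolding chi_def using exists_add_char by (rule someI_ex)

lemma chi_add: "chi (x + y :: 'a::{finite,field}) = chi x * chi y"
  using add_char_chi unfolding add_char_def by blast

lemma norm_chi: "cmod (chi (x :: 'a::{finite,field})) = 1"
  using add_char_chi unfolding add_char_def by blast

lemma chi_nontrivial: "\<exists>t. chi (t :: 'a::{finite,field}) \<noteq> 1"
  using add_char_chi unfolding add_char_def by blast

lemma chi_zero [simp]: "chi (0 :: 'a::{finite,field}) = 1"
proof -
  have "chi (0::'a) = chi (0::'a) * chi (0::'a)" using chi_add[of "0::'a" 0] by (simp only: add_0)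
  then show ?thesis using norm_chi[of "0::'a"] by (metis mult_cancel_left2 norm_zero zero_neq_one)
qed

lemma cnj_chi: "cnj (chi (x :: 'a::{finite,field})) = chi (- x)"
proof -
  have "chi x * chi (- x) = 1" using chi_add[of x "- x", symmetric] by simp
  moreover have "chi x * cnj (chi x) = 1"
    using norm_chi[of x] by (simp add: complex_norm_square[symmetric])
  ultimately show ?thesis using norm_chi[of x] by (metis mult_cancel_left norm_zero zero_neq_one)
qed

section \<open>Dual codes\<close>

lemma dotp_commute: "dotp n u v = dotp n v (u :: nat \<Rightarrow> 'a::comm_ring)"
  unfolding dotp_def by (simp add: mult.commute)

lemma dotp_add_right: "dotp n u (v + w) = dotp n u v + dotp n u (w :: nat \<Rightarrow> 'a::comm_ring)"
  unfolding dotp_def by (simp add: distrib_left sum.distrib)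

lemma dotp_diff_left: "dotp n (v - w) u = dotp n v u - dotp n w (u :: nat \<Rightarrow> 'a::comm_ring)"
  unfolding dotp_def by (simp add: left_diff_distrib sum_subtractf)

lemma dotp_scale_right: "dotp n u (vscale c v) = c * dotp n u (v :: nat \<Rightarrow> 'a::field)"
  unfolding dotp_def vscale_def by (simp add: sum_distrib_left algebra_simps)

lemma linear_code_dual: "linear_code n (dual n (C :: (nat \<Rightarrow> 'a::field) set))"
  unfolding linear_code_def vscale_subspace_iff
  by (auto simp: dual_def words_def dotp_add_right dotp_scale_right) (auto simp: vscale_def dotp_def)

lemma dual_subset_words: "dual n C \<subseteq> words n"
  by (auto simp: dual_def)

lemma dual_antimono: "S \<subseteq> D \<Longrightarrow> dual n D \<subseteq> dual n S"
  by (auto simp: dual_def)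

lemma dual_words: "dual n (words n :: (nat \<Rightarrow> 'a::field) set) = {0}"
proof
  show "dual n (words n) \<subseteq> {0 :: nat \<Rightarrow> 'a}"
  proof
    fix v :: "nat \<Rightarrow> 'a" assume v: "v \<in> dual n (words n)"
    have "v i = 0" for i
    proof (cases "i < n")
      case True
      define e where "e = (\<lambda>j. if j = i then (1::'a) else 0)"
      have "e \<in> words n" using True by (simp add: words_def e_def)
      then have "dotp n v e = 0" using v by (simp add: dual_def dotp_commute)
      moreover have "dotp n v e = v i"
        using True unfolding dotp_def e_def by (simp add: if_distrib cong: if_cong)
      ultimately show ?thesis by simp
    qed (use v in \<open>simp add: dual_def words_def\<close>)
    then show "v \<in> {0}" by (simp add: fun_eq_iff)
  qed
  show "{0} \<subseteq> dual n (words n :: (nat \<Rightarrow> 'a) set)"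
    by (simp add: dual_def words_def dotp_def)
qed

text \<open>Shifting the summation variable by an element of \<open>V\<close> on which \<open>b\<close> takes the value
  \<open>t\<close> with \<open>chi t \<noteq> 1\<close> multiplies the sum by \<open>chi t\<close>.\<close>

lemma character_sum_eq_0:
  fixes V V' :: "(nat \<Rightarrow> 'a::{finite,field}) set" and g :: "(nat \<Rightarrow> 'a) \<Rightarrow> complex"
  assumes "finite V'" and V: "linear_code n V"
    and shift: "\<And>a v. a \<in> V \<Longrightarrow> v \<in> V' \<Longrightarrow> v + a \<in> V'"
    and invariant: "\<And>a v. a \<in> V \<Longrightarrow> g (v + a) = g v"
    and "a0 \<in> V" "dotp N b a0 \<noteq> 0"
  shows "(\<Sum>v\<in>V'. chi (dotp N b v) * g v) = 0"
proof -
  obtain t :: 'a where t: "chi t \<noteq> 1" using chi_nontrivial by blast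
  define a where "a = vscale (t / dotp N b a0) a0"
  have a: "a \<in> V" "- a \<in> V"
    unfolding a_def using assms(5) linear_code_scale[OF V] linear_code_uminus[OF V] by blast+
  have ba: "dotp N b a = t" unfolding a_def dotp_scale_right using assms(6) by simp
  have shift_bij: "bij_betw (\<lambda>v. v + a) V' V'"
  proof (rule bij_betwI[where g = "\<lambda>v. v + (- a)"])
    show "(\<lambda>v. v + a) \<in> V' \<rightarrow> V'" using shift a(1) by auto
    show "(\<lambda>v. v + (- a)) \<in> V' \<rightarrow> V'" using shift[OF a(2)] by simp
  qed auto
  have "(\<Sum>v\<in>V'. chi (dotp N b v) * g v) = (\<Sum>v\<in>V'. chi (dotp N b (v + a)) * g (v + a))"
    using sum.reindex_bij_betw[OF shift_bij, of "\<lambda>v. chi (dotp N b v) * g v"] by simp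
  also have "\<dots> = chi t * (\<Sum>v\<in>V'. chi (dotp N b v) * g v)"
    by (simp add: sum_distrib_left dotp_add_right ba chi_add invariant[OF a(1)] ac_simps)
  finally have "(1 - chi t) * (\<Sum>v\<in>V'. chi (dotp N b v) * g v) = 0" by (simp add: algebra_simps)
  then show ?thesis using t by simp
qed

lemma character_sum_linear_code:
  fixes C :: "(nat \<Rightarrow> 'a::{finite,field}) set"
  assumes C: "linear_code n C" and v: "v \<in> words n"
  shows "(\<Sum>c\<in>C. chi (dotp n v c)) = (if v \<in> dual n C then of_nat (card C) else 0)"
proof (cases "v \<in> dual n C")
  case True
  then have "(\<Sum>c\<in>C. chi (dotp n v c)) = (\<Sum>c\<in>C. 1)"
    by (intro sum.cong) (auto simp: dual_def dotp_commute)
  then show ?thesis using True by simp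
next
  case False
  then obtain c0 where "c0 \<in> C" "dotp n v c0 \<noteq> 0" using v by (auto simp: dual_def dotp_commute)
  then have "(\<Sum>c\<in>C. chi (dotp n v c) * 1) = 0"
    by (intro character_sum_eq_0[OF finite_linear_code[OF C] C]) (auto intro: linear_code_add[OF C])
  then show ?thesis using False by simp
qed

text \<open>Double counting of \<open>\<Sum>\<^sub>v \<Sum>\<^sub>c chi (v \<cdot> c)\<close> over words \<open>v\<close> and codewords \<open>c\<close>.\<close>

lemma card_mult_card_dual:
  fixes C :: "(nat \<Rightarrow> 'a::{finite,field}) set"
  assumes C: "linear_code n C"
  shows "card C * card (dual n C) = CARD('a) ^ n"
proof -
  let ?W = "words n :: (nat \<Rightarrow> 'a) set"
  have CW: "C \<subseteq> ?W" using C by (rule linear_code_words)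
  have "(of_nat (card C * card (dual n C)) :: complex) = (\<Sum>v\<in>dual n C. of_nat (card C))"
    by simp
  also have "\<dots> = (\<Sum>v\<in>?W. if v \<in> dual n C then of_nat (card C) else 0)"
    using dual_subset_words[of n C] by (simp add: sum.If_cases Int_absorb1)
  also have "\<dots> = (\<Sum>v\<in>?W. \<Sum>c\<in>C. chi (dotp n v c))"
    by (rule sum.cong) (simp_all add: character_sum_linear_code[OF C])
  also have "\<dots> = (\<Sum>c\<in>C. \<Sum>v\<in>?W. chi (dotp n c v))"
    by (subst sum.swap) (simp add: dotp_commute)
  also have "\<dots> = (\<Sum>c\<in>C. if c = 0 then of_nat (card ?W) else 0)"
    using CW by (intro sum.cong) (auto simp: character_sum_linear_code[OF linear_code_all_words] dual_words)
  also have "\<dots> = of_nat (card ?W)"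
    using linear_code_zero[OF C] finite_linear_code[OF C] by simp
  finally show ?thesis by (simp only: of_nat_eq_iff card_words)
qed

lemma code_dim_dual:
  fixes C :: "(nat \<Rightarrow> 'a::{finite,field}) set"
  assumes "linear_code n C"
  shows "code_dim (dual n C) = n - code_dim C" "code_dim C \<le> n"
proof -
  have "CARD('a) ^ (code_dim C + code_dim (dual n C)) = CARD('a) ^ n"
    using card_mult_card_dual[OF assms] card_linear_code[OF assms] card_linear_code[OF linear_code_dual[of n C]]
    by (simp add: power_add)
  then have "code_dim C + code_dim (dual n C) = n" using one_less_card_field[where 'a='a] by simp
  then show "code_dim (dual n C) = n - code_dim C" "code_dim C \<le> n" by auto
qed

lemma dual_dual:
  fixes C :: "(nat \<Rightarrow> 'a::{finite,field}) set"
  assumes C: "linear_code n C"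
  shows "dual n (dual n C) = C"
proof -
  have "C \<subseteq> dual n (dual n C)"
    using linear_code_words[OF C] by (auto simp: dual_def dotp_commute)
  moreover have "code_dim (dual n (dual n C)) = code_dim C"
    using code_dim_dual[OF C] code_dim_dual[OF linear_code_dual[of n C]] by simp
  then have "card (dual n (dual n C)) = card C"
    by (simp add: card_linear_code[OF C] card_linear_code[OF linear_code_dual[of n "dual n C"]])
  ultimately show ?thesis
    by (metis card_subset_eq finite_linear_code linear_code_dual)
qed

section \<open>The \<open>(u | u + v)\<close> construction\<close>

definition plotkin :: "nat \<Rightarrow> (nat \<Rightarrow> 'a::ab_group_add) \<Rightarrow> (nat \<Rightarrow> 'a) \<Rightarrow> (nat \<Rightarrow> 'a)" where
  "plotkin n u v = (\<lambda>i. if i < n then u i else u (i - n) + v (i - n))"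

definition plotkin_code :: "nat \<Rightarrow> (nat \<Rightarrow> 'a::ab_group_add) set \<Rightarrow> (nat \<Rightarrow> 'a) set \<Rightarrow> (nat \<Rightarrow> 'a) set" where
  "plotkin_code n C C' = {plotkin n u v | u v. u \<in> C \<and> v \<in> C'}"

definition first_half :: "nat \<Rightarrow> (nat \<Rightarrow> 'a::zero) \<Rightarrow> (nat \<Rightarrow> 'a)" where
  "first_half n x = (\<lambda>i. if i < n then x i else 0)"

definition second_half :: "nat \<Rightarrow> (nat \<Rightarrow> 'a) \<Rightarrow> (nat \<Rightarrow> 'a)" where
  "second_half n x = (\<lambda>i. x (i + n))"

lemma first_half_words: "first_half n x \<in> words n"
  by (simp add: first_half_def words_def)

lemma second_half_words: "x \<in> words (n + n) \<Longrightarrow> second_half n x \<in> words n"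
  by (simp add: second_half_def words_def)

lemma halves_eq_0_iff: "first_half n x = 0 \<and> second_half n x = 0 \<longleftrightarrow> x = 0"
  by (auto simp: first_half_def second_half_def fun_eq_iff)
     (metis le_add_diff_inverse2 not_le)

lemma wt_halves:
  fixes x :: "nat \<Rightarrow> 'a::zero"
  assumes "x \<in> words (n + n)"
  shows "wt x = wt (first_half n x) + wt (second_half n x)"
proof -
  have split: "{i. x i \<noteq> 0} = {i. first_half n x i \<noteq> 0} \<union> (\<lambda>i. i + n) ` {i. second_half n x i \<noteq> 0}"
    by (auto simp: first_half_def second_half_def image_iff)
       (metis add.commute le_add_diff_inverse not_le)
  have "card {i. x i \<noteq> 0} = card {i. first_half n x i \<noteq> 0} + card ((\<lambda>i. i + n) ` {i. second_half n x i \<noteq> 0})"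
    unfolding split
    using finite_support[OF first_half_words] finite_support[OF second_half_words[OF assms]]
    by (intro card_Un_disjoint) (auto simp: first_half_def)
  also have "card ((\<lambda>i. i + n) ` {i. second_half n x i \<noteq> 0}) = card {i. second_half n x i \<noteq> 0}"
    by (intro card_image) (auto simp: inj_on_def)
  finally show ?thesis unfolding wt_def .
qed

lemma plotkin_words: "u \<in> words n \<Longrightarrow> v \<in> words n \<Longrightarrow> plotkin n u v \<in> words (n + n)"
  by (auto simp: plotkin_def words_def)

lemma first_half_plotkin: "u \<in> words n \<Longrightarrow> first_half n (plotkin n u v) = u"
  by (auto simp: first_half_def plotkin_def words_def fun_eq_iff)

lemma second_half_plotkin [simp]: "second_half n (plotkin n u v) = u + v"
  by (simp add: second_half_def plotkin_def fun_eq_iff)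

lemma plotkin_inject:
  assumes "u \<in> words n" "u' \<in> words n"
  shows "plotkin n u v = plotkin n u' v' \<longleftrightarrow> u = u' \<and> v = v'"
proof
  assume eq: "plotkin n u v = plotkin n u' v'"
  then have "u = u'" using first_half_plotkin[OF assms(1), of v] first_half_plotkin[OF assms(2), of v'] by simp
  moreover have "u + v = u' + v'" using arg_cong[OF eq, of "second_half n"] by simp
  ultimately show "u = u' \<and> v = v'" by simp
qed simp

lemma wt_plotkin:
  assumes "u \<in> words n" "v \<in> words n"
  shows "wt (plotkin n u v) = wt u + wt (u + v)"
  using wt_halves[OF plotkin_words[OF assms]] by (simp add: first_half_plotkin[OF assms(1)])

lemma dotp_plotkin:
  "dotp (n + n) (plotkin n u v) x = dotp n u (first_half n x) + dotp n (u + v) (second_half n x)"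
proof -
  have "(\<Sum>i<n + m. f i) = (\<Sum>i<n. f i) + (\<Sum>i<m. f (i + n))" for f :: "nat \<Rightarrow> 'a" and m
    by (induction m) (auto simp: add.commute add.left_commute)
  then show ?thesis
    by (simp add: dotp_def plotkin_def first_half_def second_half_def)
qed

lemma linear_code_plotkin_code:
  fixes C C' :: "(nat \<Rightarrow> 'a::field) set"
  assumes C: "linear_code n C" and C': "linear_code n C'"
  shows "linear_code (n + n) (plotkin_code n C C')"
  unfolding linear_code_def vscale_subspace_iff
proof (intro conjI ballI allI subsetI)
  show "x \<in> words (n + n)" if "x \<in> plotkin_code n C C'" for x
    using that linear_code_words[OF C] linear_code_words[OF C']
    by (auto simp: plotkin_code_def intro!: plotkin_words)
  have "plotkin n 0 0 = (0 :: nat \<Rightarrow> 'a)" by (simp add: plotkin_def fun_eq_iff)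
  then show "0 \<in> plotkin_code n C C'"
    unfolding plotkin_code_def using linear_code_zero[OF C] linear_code_zero[OF C'] by force
next
  fix x y assume "x \<in> plotkin_code n C C'" "y \<in> plotkin_code n C C'"
  then obtain u v u' v' where "x = plotkin n u v" "u \<in> C" "v \<in> C'" "y = plotkin n u' v'" "u' \<in> C" "v' \<in> C'"
    unfolding plotkin_code_def by auto
  moreover have "plotkin n u v + plotkin n u' v' = plotkin n (u + u') (v + v')" for u v u' v'
    by (simp add: plotkin_def fun_eq_iff)
  ultimately show "x + y \<in> plotkin_code n C C'"
    unfolding plotkin_code_def using linear_code_add[OF C] linear_code_add[OF C'] by blast
next
  fix c :: 'a and x assume "x \<in> plotkin_code n C C'"
  then obtain u v where "x = plotkin n u v" "u \<in> C" "v \<in> C'" unfolding plotkin_code_def by auto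
  moreover have "vscale c (plotkin n u v) = plotkin n (vscale c u) (vscale c v)" for u v
    by (simp add: plotkin_def vscale_def fun_eq_iff algebra_simps)
  ultimately show "vscale c x \<in> plotkin_code n C C'"
    unfolding plotkin_code_def using linear_code_scale[OF C] linear_code_scale[OF C'] by blast
qed

lemma card_plotkin_code:
  assumes "C \<subseteq> words n"
  shows "card (plotkin_code n C C') = card C * card C'"
proof -
  have "plotkin_code n C C' = (\<lambda>(u, v). plotkin n u v) ` (C \<times> C')"
    unfolding plotkin_code_def by auto
  moreover have "inj_on (\<lambda>(u, v). plotkin n u v) (C \<times> C')"
    using assms by (auto simp: inj_on_def plotkin_inject subset_iff)
  ultimately show ?thesis by (simp add: card_image card_cartesian_product)
qed

lemma code_dim_plotkin_code:
  fixes C C' :: "(nat \<Rightarrow> 'a::{finite,field}) set"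
  assumes C: "linear_code n C" and C': "linear_code n C'"
  shows "code_dim (plotkin_code n C C') = code_dim C + code_dim C'"
  unfolding code_dim_eq_iff_card[OF linear_code_plotkin_code[OF C C']]
  using card_plotkin_code[OF linear_code_words[OF C]] card_linear_code[OF C] card_linear_code[OF C']
  by (simp add: power_add)

lemma plotkin_code_mono: "A \<subseteq> C \<Longrightarrow> B \<subseteq> C' \<Longrightarrow> plotkin_code n A B \<subseteq> plotkin_code n C C'"
  unfolding plotkin_code_def by blast

text \<open>A nonzero \<open>(u | u + v)\<close> has weight \<open>2 wt u \<ge> 2 d(C)\<close> if \<open>v = 0\<close>, and otherwise
  \<open>wt u + wt (u + v) \<ge> wt v \<ge> d(C')\<close>.\<close>

lemma wt_plotkin_code:
  fixes C C' :: "(nat \<Rightarrow> 'a::{finite,field}) set"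
  assumes C: "linear_code n C" and C': "linear_code n C'"
    and x: "x \<in> plotkin_code n C C'" "x \<noteq> 0"
  shows "min (2 * min_dist C) (min_dist C') \<le> wt x"
proof -
  obtain u v where uv: "x = plotkin n u v" "u \<in> C" "v \<in> C'"
    using x unfolding plotkin_code_def by auto
  have u: "u \<in> words n" and v: "v \<in> words n"
    using uv linear_code_words[OF C] linear_code_words[OF C'] by auto
  have wt_x: "wt x = wt u + wt (u + v)" using wt_plotkin[OF u v] uv by simp
  show ?thesis
  proof (cases "v = 0")
    case True
    have "plotkin n 0 0 = (0 :: nat \<Rightarrow> 'a)" by (simp add: plotkin_def fun_eq_iff)
    then have "u \<noteq> 0" using x(2) uv True by auto
    then have "min_dist C \<le> wt u" using min_dist_le_wt[OF finite_linear_code[OF C] uv(2)] by simp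
    then show ?thesis using wt_x True by simp
  next
    case False
    then have "min_dist C' \<le> wt v" using min_dist_le_wt[OF finite_linear_code[OF C'] uv(3)] by simp
    also have "wt v \<le> wt (- u) + wt (u + v)"
      using wt_add_le[of "- u" n "u + v"] u v by (simp add: words_def)
    finally show ?thesis using wt_x by simp
  qed
qed

text \<open>If \<open>(x | y)\<close> is orthogonal to all \<open>(u | u + v)\<close>, then \<open>y \<in> C'\<^sup>\<perp>\<close> (take \<open>u = 0\<close>) and
  \<open>x + y \<in> C\<^sup>\<perp>\<close> (take \<open>v = 0\<close>); so its weight is \<open>2 wt y\<close> if \<open>x + y = 0\<close> and otherwise at
  least \<open>wt (x + y)\<close>.\<close>

lemma wt_dual_plotkin_code:
  fixes C C' :: "(nat \<Rightarrow> 'a::{finite,field}) set"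
  assumes C: "linear_code n C" and C': "linear_code n C'"
    and a: "a \<in> dual (n + n) (plotkin_code n C C')" "a \<noteq> 0"
  shows "min (2 * min_dist (dual n C')) (min_dist (dual n C)) \<le> wt a"
proof -
  define x where "x = first_half n a"
  define y where "y = second_half n a"
  have a_words: "a \<in> words (n + n)" using a(1) dual_subset_words by blast
  have x: "x \<in> words n" and y: "y \<in> words n"
    unfolding x_def y_def using first_half_words second_half_words[OF a_words] by blast+
  have wt_a: "wt a = wt x + wt y" unfolding x_def y_def by (rule wt_halves[OF a_words])
  have orth: "dotp n u x + dotp n (u + v) y = 0" if "u \<in> C" "v \<in> C'" for u v
  proof -
    have "plotkin n u v \<in> plotkin_code n C C'" using that unfolding plotkin_code_def by blast
    then show ?thesis using a(1) by (auto simp: dual_def dotp_plotkin x_def y_def)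
  qed
  have y_dual: "y \<in> dual n C'"
    using y orth[OF linear_code_zero[OF C]] by (simp add: dual_def dotp_def)
  have xy_dual: "x + y \<in> dual n C"
    using words_add[OF x y] orth[OF _ linear_code_zero[OF C']]
    by (simp add: dual_def dotp_add_right dotp_commute[of n _ x] dotp_commute[of n _ y])
  show ?thesis
  proof (cases "x + y = 0")
    case True
    then have "x = - y" by (simp add: eq_neg_iff_add_eq_0)
    moreover have "y \<noteq> 0" using a(2) halves_eq_0_iff[of n a] True unfolding x_def y_def by auto
    then have "min_dist (dual n C') \<le> wt y"
      using min_dist_le_wt[OF finite_linear_code[OF linear_code_dual] y_dual] by simp
    ultimately show ?thesis using wt_a by simp
  next
    case False
    then have "min_dist (dual n C) \<le> wt (x + y)"
      using min_dist_le_wt[OF finite_linear_code[OF linear_code_dual] xy_dual] by simp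
    also have "\<dots> \<le> wt x + wt y" by (rule wt_add_le[OF x y])
    finally show ?thesis using wt_a by simp
  qed
qed

section \<open>Coset states\<close>

lemma sum_fun_apply: "(\<Sum>x\<in>A. f x) v = (\<Sum>x\<in>A. f x v :: 'b::comm_monoid_add)"
  by (induction A rule: infinite_finite_induct) auto

definition block_constant_functions :: "(nat \<Rightarrow> 'a) set set \<Rightarrow> ((nat \<Rightarrow> 'a) \<Rightarrow> complex) set" where
  "block_constant_functions K =
     {f. (\<forall>v. f v \<noteq> 0 \<longrightarrow> v \<in> \<Union>K) \<and> (\<forall>X\<in>K. \<forall>v\<in>X. \<forall>w\<in>X. f v = f w)}"

lemma subspace_block_constant_functions: "module.subspace cscale (block_constant_functions K)"
  unfolding cscale_subspace_iff
proof (intro conjI ballI allI)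
  fix f g assume f: "f \<in> block_constant_functions K" and g: "g \<in> block_constant_functions K"
  from f g have "\<forall>v. f v \<noteq> 0 \<longrightarrow> v \<in> \<Union>K" "\<forall>X\<in>K. \<forall>v\<in>X. \<forall>w\<in>X. f v = f w"
    "\<forall>v. g v \<noteq> 0 \<longrightarrow> v \<in> \<Union>K" "\<forall>X\<in>K. \<forall>v\<in>X. \<forall>w\<in>X. g v = g w"
    unfolding block_constant_functions_def by blast+
  then show "f + g \<in> block_constant_functions K"
    unfolding block_constant_functions_def plus_fun_apply mem_Collect_eq by (metis add_0)
next
  fix c f assume "f \<in> block_constant_functions K"
  then have "\<forall>v. f v \<noteq> 0 \<longrightarrow> v \<in> \<Union>K" "\<forall>X\<in>K. \<forall>v\<in>X. \<forall>w\<in>X. f v = f w"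
    unfolding block_constant_functions_def by blast+
  then show "cscale c f \<in> block_constant_functions K"
    unfolding block_constant_functions_def cscale_def mem_Collect_eq by (metis mult_zero_right)
qed (simp add: block_constant_functions_def)

lemma inj_on_indicator: "inj_on (indicator :: 'b set \<Rightarrow> 'b \<Rightarrow> complex) K"
proof -
  have "X = {v. indicator X v = (1::complex)}" for X :: "'b set"
    by (simp add: indicator_def)
  then show ?thesis by (metis inj_onI)
qed

lemma sum_indicator_blocks:
  assumes "finite K" "disjoint K" "X \<in> K" "v \<in> X"
  shows "(\<Sum>Y\<in>K. c Y * indicator Y v) = (c X :: complex)"
proof -
  have "(\<Sum>Y\<in>K. c Y * indicator Y v) = (\<Sum>Y\<in>K. if Y = X then c X else 0)"
  proof (rule sum.cong)
    fix Y assume "Y \<in> K"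
    then have "v \<notin> Y" if "Y \<noteq> X"
      using assms(2-4) that unfolding pairwise_def disjnt_def by blast
    then show "c Y * indicator Y v = (if Y = X then c X else 0)"
      using assms(4) by auto
  qed simp
  then show ?thesis using assms(1,3) by simp
qed

lemma indicator_block_constant_functions:
  assumes disj: "disjoint K" and "X \<in> K"
  shows "(indicator X :: (nat \<Rightarrow> 'a) \<Rightarrow> complex) \<in> block_constant_functions K"
proof -
  have "X \<inter> Y = {}" if "Y \<in> K" "Y \<noteq> X" for Y
    using disj \<open>X \<in> K\<close> that unfolding pairwise_def disjnt_def by blast
  then show ?thesis
    using \<open>X \<in> K\<close> unfolding block_constant_functions_def indicator_def by fastforce
qed

lemma span_indicators_block_constant_functions:
  assumes fin: "finite K" and disj: "disjoint K" and nonempty: "{} \<notin> K"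
  shows "module.span cscale (indicator ` K :: ((nat \<Rightarrow> 'a) \<Rightarrow> complex) set) = block_constant_functions K"
proof -
  interpret cs: vector_space "cscale :: complex \<Rightarrow> ((nat \<Rightarrow> 'a) \<Rightarrow> complex) \<Rightarrow> _"
    by (rule vector_space_cscale)
  let ?Q = "block_constant_functions K"
  have "indicator ` K \<subseteq> ?Q" using indicator_block_constant_functions[OF disj] by blast
  moreover have "?Q \<subseteq> cs.span (indicator ` K)"
  proof
    fix f assume f: "f \<in> ?Q"
    define rep where "rep X = (SOME v. v \<in> X)" for X :: "(nat \<Rightarrow> 'a) set"
    have rep: "rep X \<in> X" if "X \<in> K" for X
      using nonempty that unfolding rep_def by (metis some_in_eq)
    have "f = (\<Sum>X\<in>K. cscale (f (rep X)) (indicator X))"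
    proof
      fix v
      show "f v = (\<Sum>X\<in>K. cscale (f (rep X)) (indicator X)) v"
      proof (cases "v \<in> \<Union>K")
        case True
        then obtain X where X: "X \<in> K" "v \<in> X" by blast
        have "(\<Sum>Y\<in>K. cscale (f (rep Y)) (indicator Y)) v = (\<Sum>Y\<in>K. f (rep Y) * indicator Y v)"
          by (simp add: sum_fun_apply cscale_def)
        also have "\<dots> = f (rep X)" by (rule sum_indicator_blocks[OF fin disj X])
        also have "\<dots> = f v" using f rep[OF X(1)] X unfolding block_constant_functions_def by blast
        finally show ?thesis by simp
      next
        case False
        then show ?thesis
          using f by (auto simp: sum_fun_apply cscale_def block_constant_functions_def indicator_def)
      qed
    qed
    also have "\<dots> \<in> cs.span (indicator ` K)"
      by (intro cs.span_sum cs.span_scale cs.span_base) auto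
    finally show "f \<in> cs.span (indicator ` K)" .
  qed
  moreover have "cs.subspace ?Q" by (rule subspace_block_constant_functions)
  ultimately show ?thesis by (rule cs.span_subspace)
qed

lemma independent_indicators:
  assumes fin: "finite K" and disj: "disjoint K" and nonempty: "{} \<notin> K"
  shows "\<not> module.dependent cscale (indicator ` K :: ((nat \<Rightarrow> 'a) \<Rightarrow> complex) set)"
proof -
  interpret cs: vector_space "cscale :: complex \<Rightarrow> ((nat \<Rightarrow> 'a) \<Rightarrow> complex) \<Rightarrow> _"
    by (rule vector_space_cscale)
  let ?B = "indicator ` K :: ((nat \<Rightarrow> 'a) \<Rightarrow> complex) set"
  show ?thesis
  proof (rule cs.independent_if_scalars_zero)
    show "finite ?B" using fin by simp
    fix g x assume zero: "(\<Sum>x\<in>?B. cscale (g x) x) = 0" and "x \<in> ?B"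
    then obtain X where X: "X \<in> K" "x = indicator X" by auto
    have "X \<noteq> {}" using nonempty X(1) by blast
    then obtain v where v: "v \<in> X" by blast
    have "0 = (\<Sum>x\<in>?B. cscale (g x) x) v" using zero by simp
    also have "\<dots> = (\<Sum>Y\<in>K. g (indicator Y) * indicator Y v)"
      by (simp add: sum_fun_apply sum.reindex[OF inj_on_indicator] cscale_def)
    also have "\<dots> = g x" using sum_indicator_blocks[OF fin disj X(1) v] X(2) by simp
    finally show "g x = 0" by simp
  qed
qed

lemma dim_block_constant_functions:
  assumes "finite K" "disjoint K" "{} \<notin> K"
  shows "vector_space.dim cscale (block_constant_functions K) = card K"
proof -
  interpret cs: vector_space "cscale :: complex \<Rightarrow> ((nat \<Rightarrow> 'a) \<Rightarrow> complex) \<Rightarrow> _"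
    by (rule vector_space_cscale)
  have "cs.dim (cs.span (indicator ` K)) = card (indicator ` K :: ((nat \<Rightarrow> 'a) \<Rightarrow> complex) set)"
    by (rule cs.dim_span_eq_card_independent[OF independent_indicators[OF assms]])
  then show ?thesis
    using span_indicators_block_constant_functions[OF assms] card_image[OF inj_on_indicator] by simp
qed

definition coset_states :: "(nat \<Rightarrow> 'a::ab_group_add) set \<Rightarrow> (nat \<Rightarrow> 'a) set \<Rightarrow> ((nat \<Rightarrow> 'a) \<Rightarrow> complex) set" where
  "coset_states Sp A = {f. (\<forall>v. f v \<noteq> 0 \<longrightarrow> v \<in> Sp) \<and> (\<forall>a\<in>A. \<forall>v. f (v + a) = f v)}"

lemma mem_coset_iff: "x \<in> (+) v ` A \<longleftrightarrow> x - v \<in> (A :: 'a::ab_group_add set)"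
  by (auto simp: image_iff algebra_simps) (metis add.commute diff_add_cancel)

lemma coset_eq:
  assumes A: "linear_code n A" and "v \<in> (+) w ` A"
  shows "(+) v ` A = (+) w ` A"
proof -
  have d: "v - w \<in> A" using assms(2) mem_coset_iff by blast
  have "x - v \<in> A \<longleftrightarrow> x - w \<in> A" for x
    using linear_code_add[OF A _ d, of "x - v"] linear_code_diff[OF A _ d, of "x - w"] by auto
  then show ?thesis by (intro set_eqI) (simp only: mem_coset_iff)
qed

lemma cosets_disjoint:
  assumes A: "linear_code n A" and "(+) u ` A \<noteq> (+) w ` A"
  shows "(+) u ` A \<inter> (+) w ` A = {}"
proof (rule ccontr)
  assume "(+) u ` A \<inter> (+) w ` A \<noteq> {}"
  then obtain z where "z \<in> (+) u ` A" "z \<in> (+) w ` A" by blast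
  then have "(+) z ` A = (+) u ` A" "(+) z ` A = (+) w ` A" using coset_eq[OF A] by blast+
  with assms(2) show False by simp
qed

lemma coset_self: "linear_code n A \<Longrightarrow> v \<in> (+) v ` A"
  using linear_code_zero by force

lemma coset_subset: "linear_code n A \<Longrightarrow> linear_code n Sp \<Longrightarrow> A \<subseteq> Sp \<Longrightarrow> v \<in> Sp \<Longrightarrow> (+) v ` A \<subseteq> Sp"
  using linear_code_add by blast

lemma Union_cosets:
  assumes A: "linear_code n A" and Sp: "linear_code n Sp" and "A \<subseteq> Sp"
  shows "\<Union>((\<lambda>v. (+) v ` A) ` Sp) = Sp"
proof
  show "\<Union>((\<lambda>v. (+) v ` A) ` Sp) \<subseteq> Sp"
    using coset_subset[OF assms] by (simp add: UN_subset_iff)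
  show "Sp \<subseteq> \<Union>((\<lambda>v. (+) v ` A) ` Sp)"
    using coset_self[OF A] by blast
qed

lemma coset_states_eq_block_constant_functions:
  fixes A Sp :: "(nat \<Rightarrow> 'a::field) set"
  assumes A: "linear_code n A" and Sp: "linear_code n Sp" and "A \<subseteq> Sp"
  shows "coset_states Sp A = block_constant_functions ((\<lambda>v. (+) v ` A) ` Sp)"
proof (intro set_eqI iffI)
  fix f assume f: "f \<in> coset_states Sp A"
  have const: "f w = f v" if "v \<in> (+) u ` A" "w \<in> (+) u ` A" for u v w
  proof -
    have "(+) v ` A = (+) u ` A" by (rule coset_eq[OF A that(1)])
    then have "w \<in> (+) v ` A" using that(2) by simp
    then have "w - v \<in> A" by (simp only: mem_coset_iff)
    then have "f (v + (w - v)) = f v" using f unfolding coset_states_def by blast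
    then show ?thesis by simp
  qed
  have "\<forall>X\<in>(\<lambda>v. (+) v ` A) ` Sp. \<forall>v\<in>X. \<forall>w\<in>X. f v = f w"
  proof (intro ballI)
    fix X v w assume "X \<in> (\<lambda>v. (+) v ` A) ` Sp" "v \<in> X" "w \<in> X"
    then obtain u where "v \<in> (+) u ` A" "w \<in> (+) u ` A" by blast
    then show "f v = f w" by (rule const[symmetric])
  qed
  moreover have "\<forall>v. f v \<noteq> 0 \<longrightarrow> v \<in> Sp" using f by (simp add: coset_states_def)
  ultimately show "f \<in> block_constant_functions ((\<lambda>v. (+) v ` A) ` Sp)"
    unfolding block_constant_functions_def Union_cosets[OF assms] by (intro CollectI conjI)
next
  fix f assume f: "f \<in> block_constant_functions ((\<lambda>v. (+) v ` A) ` Sp)"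
  then have support: "\<forall>v. f v \<noteq> 0 \<longrightarrow> v \<in> Sp"
    and const: "\<forall>X\<in>(\<lambda>v. (+) v ` A) ` Sp. \<forall>v\<in>X. \<forall>w\<in>X. f v = f w"
    unfolding block_constant_functions_def Union_cosets[OF assms] mem_Collect_eq by (rule conjunct1, rule conjunct2)
  have "f (v + a) = f v" if "a \<in> A" for a v
  proof (cases "v \<in> Sp")
    case True
    have "v \<in> (+) v ` A" "v + a \<in> (+) v ` A" using coset_self[OF A] that by auto
    moreover have "(+) v ` A \<in> (\<lambda>v. (+) v ` A) ` Sp" using True by (rule imageI)
    ultimately show ?thesis using const by blast
  next
    case False
    then have "v + a \<notin> Sp"
      using that \<open>A \<subseteq> Sp\<close> linear_code_diff[OF Sp, of "v + a" a] by auto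
    then show ?thesis using False support by metis
  qed
  with support show "f \<in> coset_states Sp A" by (simp add: coset_states_def)
qed

lemma card_mult_card_cosets:
  fixes A Sp :: "(nat \<Rightarrow> 'a::{finite,field}) set"
  assumes A: "linear_code n A" and Sp: "linear_code n Sp" and "A \<subseteq> Sp"
  shows "card A * card ((\<lambda>v. (+) v ` A) ` Sp) = card Sp"
proof -
  let ?K = "(\<lambda>v. (+) v ` A) ` Sp"
  have union: "\<Union>?K = Sp" by (rule Union_cosets[OF assms])
  have "card A * card ?K = card (\<Union>?K)"
  proof (rule card_partition)
    show "finite ?K" "finite (\<Union>?K)" using finite_linear_code[OF Sp] union by simp_all
    show "card X = card A" if "X \<in> ?K" for X
      using that by (auto intro: card_image simp: inj_on_def)
    show "X \<inter> Y = {}" if "X \<in> ?K" "Y \<in> ?K" "X \<noteq> Y" for X Y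
      using that cosets_disjoint[OF A] by blast
  qed
  then show ?thesis using union by simp
qed

lemma dim_coset_states:
  fixes A Sp :: "(nat \<Rightarrow> 'a::{finite,field}) set"
  assumes A: "linear_code n A" and Sp: "linear_code n Sp" and "A \<subseteq> Sp"
  shows "vector_space.dim cscale (coset_states Sp A) * card A = card Sp"
proof -
  let ?K = "(\<lambda>v. (+) v ` A) ` Sp"
  have "disjoint ?K"
    unfolding pairwise_def disjnt_def using cosets_disjoint[OF A] by blast
  moreover have "{} \<notin> ?K" using coset_self[OF A] by blast
  moreover have "finite ?K" using finite_linear_code[OF Sp] by simp
  ultimately have "vector_space.dim cscale (coset_states Sp A) = card ?K"
    by (simp add: coset_states_eq_block_constant_functions[OF assms] dim_block_constant_functions)
  then show ?thesis using card_mult_card_cosets[OF assms] by (simp add: mult.commute)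
qed

lemma cinner_error_operators:
  fixes a1 a2 b1 b2 :: "nat \<Rightarrow> 'a::{finite,field}"
  assumes a1: "a1 \<in> words N"
  shows "cinner N (Xop a1 (Zop N b1 u)) (Xop a2 (Zop N b2 w)) =
    chi (dotp N b2 (a1 - a2)) * (\<Sum>v\<in>words N. chi (dotp N (b2 - b1) v) * (cnj (u v) * w (v + (a1 - a2))))"
proof -
  let ?W = "words N :: (nat \<Rightarrow> 'a) set"
  let ?G = "\<lambda>v. cnj (chi (dotp N b1 (v - a1)) * u (v - a1)) * (chi (dotp N b2 (v - a2)) * w (v - a2))"
  have bij: "bij_betw (\<lambda>v. v + a1) ?W ?W"
  proof (rule bij_betwI[where g = "\<lambda>v. v - a1"])
    show "(\<lambda>v. v + a1) \<in> ?W \<rightarrow> ?W" using a1 words_add by blast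
    show "(\<lambda>v. v - a1) \<in> ?W \<rightarrow> ?W" using a1 words_diff by blast
  qed auto
  have "cinner N (Xop a1 (Zop N b1 u)) (Xop a2 (Zop N b2 w)) = (\<Sum>v\<in>?W. ?G (v + a1))"
    unfolding cinner_def Xop_def Zop_def using sum.reindex_bij_betw[OF bij, of ?G] by simp
  also have "\<dots> = (\<Sum>v\<in>?W. chi (dotp N b2 (a1 - a2)) *
      (chi (dotp N (b2 - b1) v) * (cnj (u v) * w (v + (a1 - a2)))))"
  proof (rule sum.cong)
    fix v :: "nat \<Rightarrow> 'a"
    have e1: "v + a1 - a1 = v" by simp
    have e2: "v + a1 - a2 = v + (a1 - a2)" by (simp add: algebra_simps)
    have c1: "cnj (chi (dotp N b1 v)) = chi (- dotp N b1 v)" by (rule cnj_chi)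
    have c2: "chi (dotp N b2 (v + (a1 - a2))) = chi (dotp N b2 v) * chi (dotp N b2 (a1 - a2))"
      by (simp add: dotp_add_right chi_add)
    have c3: "chi (- dotp N b1 v) * chi (dotp N b2 v) = chi (dotp N (b2 - b1) v)"
      by (simp add: chi_add[symmetric] dotp_diff_left)
    show "?G (v + a1) = chi (dotp N b2 (a1 - a2)) *
        (chi (dotp N (b2 - b1) v) * (cnj (u v) * w (v + (a1 - a2))))"
      unfolding e1 e2 complex_cnj_mult c1 c2 c3[symmetric] by (simp add: ac_simps)
  qed simp
  finally show ?thesis by (simp add: sum_distrib_left)
qed

lemma coset_states_shift_out:
  assumes Sp: "linear_code n Sp" and "a \<notin> Sp" "u \<in> coset_states Sp A" "w \<in> coset_states Sp A"
  shows "cnj (u v) * w (v + a) = 0"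
proof (cases "v \<in> Sp \<and> v + a \<in> Sp")
  case True
  then have "v + a - v \<in> Sp" by (blast intro: linear_code_diff[OF Sp])
  with \<open>a \<notin> Sp\<close> show ?thesis by simp
next
  case False
  then show ?thesis using assms(3,4) unfolding coset_states_def by auto
qed

text \<open>The summand is invariant under shifting \<open>v\<close> by \<open>A\<close>, so a character nontrivial on \<open>A\<close>
  kills the sum.\<close>

lemma twisted_sum_coset_states_eq_0:
  fixes A :: "(nat \<Rightarrow> 'a::{finite,field}) set"
  assumes A: "linear_code N A" and u: "u \<in> coset_states Sp A" and w: "w \<in> coset_states Sp A"
    and "a0 \<in> A" "dotp N b a0 \<noteq> 0"
  shows "(\<Sum>v\<in>words N. chi (dotp N b v) * (cnj (u v) * w (v + a))) = 0"
proof (rule character_sum_eq_0[OF finite_words A])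
  show "v + x \<in> words N" if "x \<in> A" "v \<in> words N" for x v
    using that linear_code_words[OF A] words_add by blast
  show "cnj (u (v + x)) * w (v + x + a) = cnj (u v) * w (v + a)" if "x \<in> A" for x v
  proof -
    have "u (v + x) = u v" "w ((v + a) + x) = w (v + a)"
      using that u w unfolding coset_states_def by blast+
    moreover have "v + x + a = (v + a) + x" by (simp add: algebra_simps)
    ultimately show ?thesis by (simp only:)
  qed
qed (use assms in auto)

lemma twisted_sum_coset_states_trivial:
  fixes A :: "(nat \<Rightarrow> 'a::{finite,field}) set"
  assumes "u \<in> coset_states Sp A" "w \<in> coset_states Sp A" "a \<in> A" "b \<in> dual N Sp"
  shows "(\<Sum>v\<in>words N. chi (dotp N b v) * (cnj (u v) * w (v + a))) = cinner N u w"
  unfolding cinner_def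
proof (rule sum.cong)
  fix v
  show "chi (dotp N b v) * (cnj (u v) * w (v + a)) = cnj (u v) * w v"
  proof (cases "u v = 0")
    case False
    then have "v \<in> Sp" using assms(1) unfolding coset_states_def by auto
    then have "dotp N v b = 0" using assms(4) by (simp add: dual_def)
    then have "dotp N b v = 0" by (metis dotp_commute)
    moreover have "w (v + a) = w v" using assms(2,3) unfolding coset_states_def by blast
    ultimately show ?thesis by simp
  qed simp
qed simp

lemma mem_if_wt_below:
  assumes "x \<in> T" "x \<in> words n" "0 \<in> S" "\<And>y. y \<in> T \<Longrightarrow> y \<notin> S \<Longrightarrow> d \<le> wt y"
    and "wt x \<le> 2 * ((d - 1) div 2)"
  shows "x \<in> S"
proof (rule ccontr)
  assume "x \<notin> S"
  then have "d \<le> wt x" using assms(1,4) by blast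
  with assms(5) have "wt x = 0" by presburger
  then have "x = 0" using wt_eq_0_iff[OF assms(2)] by simp
  with \<open>x \<notin> S\<close> assms(3) show False by simp
qed

section \<open>The CSS construction\<close>

text \<open>The code is spanned by the uniform superpositions over the cosets of \<open>D\<^sup>\<perp>\<close> in \<open>S\<^sup>\<perp>\<close>,
  i.e. the Fourier transform of the usual span of the coset states \<open>|x + S\<rangle>\<close>, \<open>x \<in> D\<close>.\<close>

definition css_code :: "nat \<Rightarrow> (nat \<Rightarrow> 'a::field) set \<Rightarrow> (nat \<Rightarrow> 'a) set \<Rightarrow> ((nat \<Rightarrow> 'a) \<Rightarrow> complex) set" where
  "css_code N S D = coset_states (dual N S) (dual N D)"

text \<open>After cancelling phases, the Knill--Laflamme condition for the error pair with
  difference \<open>(a, b)\<close> only involves the following sum.\<close>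

lemma css_code_twisted_sum_proportional:
  fixes S D :: "(nat \<Rightarrow> 'a::{finite,field}) set"
  assumes S: "linear_code N S" and D: "linear_code N D"
    and dz: "\<And>b. b \<in> D \<Longrightarrow> b \<notin> S \<Longrightarrow> dz \<le> wt b"
    and dx: "\<And>a. a \<in> dual N S \<Longrightarrow> a \<notin> dual N D \<Longrightarrow> dx \<le> wt a"
    and a: "a \<in> words N" "wt a \<le> 2 * ((dx - 1) div 2)"
    and b: "b \<in> words N" "wt b \<le> 2 * ((dz - 1) div 2)"
  shows "\<exists>c. \<forall>u\<in>css_code N S D. \<forall>w\<in>css_code N S D.
    (\<Sum>v\<in>words N. chi (dotp N b v) * (cnj (u v) * w (v + a))) = c * cinner N u w"
proof (cases "a \<in> dual N S")
  case False
  show ?thesis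
  proof (intro exI[of _ 0] ballI)
    fix u w assume "u \<in> css_code N S D" "w \<in> css_code N S D"
    then show "(\<Sum>v\<in>words N. chi (dotp N b v) * (cnj (u v) * w (v + a))) = 0 * cinner N u w"
      unfolding css_code_def by (simp add: coset_states_shift_out[OF linear_code_dual False])
  qed
next
  case True
  then have aD: "a \<in> dual N D"
    using mem_if_wt_below[OF _ a(1) linear_code_zero[OF linear_code_dual] dx a(2)] by blast
  show ?thesis
  proof (cases "\<exists>a0\<in>dual N D. dotp N b a0 \<noteq> 0")
    case True
    then show ?thesis
      using twisted_sum_coset_states_eq_0[OF linear_code_dual]
      by (intro exI[of _ 0]) (auto simp: css_code_def)
  next
    case False
    then have "dotp N a0 b = 0" if "a0 \<in> dual N D" for a0
      using that dotp_commute[of N a0 b] by auto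
    then have "b \<in> dual N (dual N D)" using b(1) by (simp add: dual_def[of N "dual N D"])
    then have "b \<in> D" using dual_dual[OF D] by simp
    then have "b \<in> S" using mem_if_wt_below[OF _ b(1) linear_code_zero[OF S] dz b(2)] by blast
    then have "b \<in> dual N (dual N S)" using dual_dual[OF S] by simp
    then show ?thesis
      using twisted_sum_coset_states_trivial[OF _ _ aD]
      by (intro exI[of _ 1]) (auto simp: css_code_def)
  qed
qed

lemma css_code_corrects:
  fixes S D :: "(nat \<Rightarrow> 'a::{finite,field}) set"
  assumes S: "linear_code N S" and D: "linear_code N D"
    and dz: "\<And>b. b \<in> D \<Longrightarrow> b \<notin> S \<Longrightarrow> dz \<le> wt b"
    and dx: "\<And>a. a \<in> dual N S \<Longrightarrow> a \<notin> dual N D \<Longrightarrow> dx \<le> wt a"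
  shows "corrects N (css_code N S D) (errors N ((dx - 1) div 2) ((dz - 1) div 2))"
  unfolding corrects_def
proof (intro ballI)
  fix e1 e2 :: "((nat \<Rightarrow> 'a) \<Rightarrow> complex) \<Rightarrow> (nat \<Rightarrow> 'a) \<Rightarrow> complex"
  assume "e1 \<in> errors N ((dx - 1) div 2) ((dz - 1) div 2)"
    "e2 \<in> errors N ((dx - 1) div 2) ((dz - 1) div 2)"
  then obtain a1 b1 a2 b2 :: "nat \<Rightarrow> 'a" where e: "e1 = (\<lambda>f. Xop a1 (Zop N b1 f))" "e2 = (\<lambda>f. Xop a2 (Zop N b2 f))"
    and words: "a1 \<in> words N" "b1 \<in> words N" "a2 \<in> words N" "b2 \<in> words N"
    and wt: "wt a1 \<le> (dx - 1) div 2" "wt b1 \<le> (dz - 1) div 2"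
      "wt a2 \<le> (dx - 1) div 2" "wt b2 \<le> (dz - 1) div 2"
    unfolding errors_def by blast
  have "a1 - a2 \<in> words N" "wt (a1 - a2) \<le> 2 * ((dx - 1) div 2)"
    using words_diff wt_diff_le[of a1 N a2] words wt by auto
  moreover have "b2 - b1 \<in> words N" "wt (b2 - b1) \<le> 2 * ((dz - 1) div 2)"
    using words_diff wt_diff_le[of b2 N b1] words wt by auto
  ultimately obtain c where c: "\<forall>u\<in>css_code N S D. \<forall>w\<in>css_code N S D.
      (\<Sum>v\<in>words N. chi (dotp N (b2 - b1) v) * (cnj (u v) * w (v + (a1 - a2)))) = c * cinner N u w"
    using css_code_twisted_sum_proportional[OF S D dz dx] by blast
  show "\<exists>c. \<forall>u\<in>css_code N S D. \<forall>w\<in>css_code N S D. cinner N (e1 u) (e2 w) = c * cinner N u w"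
    using c by (intro exI[of _ "chi (dotp N b2 (a1 - a2)) * c"])
      (simp add: e cinner_error_operators[OF words(1)])
qed

lemma css_code_is_AQECC:
  fixes S D :: "(nat \<Rightarrow> 'a::{finite,field}) set"
  assumes S: "linear_code N S" and D: "linear_code N D" and "S \<subseteq> D"
    and dz: "\<And>b. b \<in> D \<Longrightarrow> b \<notin> S \<Longrightarrow> dz \<le> wt b"
    and dx: "\<And>a. a \<in> dual N S \<Longrightarrow> a \<notin> dual N D \<Longrightarrow> dx \<le> wt a"
  shows "is_AQECC N (code_dim D - code_dim S) dz dx (css_code N S D)"
proof -
  let ?q = "CARD('a)"
  have duals: "linear_code N (dual N D)" "linear_code N (dual N S)" "dual N D \<subseteq> dual N S"
    using linear_code_dual dual_antimono[OF \<open>S \<subseteq> D\<close>] by auto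
  have dims: "code_dim S \<le> code_dim D" "code_dim D \<le> N"
    using code_dim_mono[OF D S \<open>S \<subseteq> D\<close>] code_dim_dual(2)[OF D] by auto
  have "vector_space.dim cscale (css_code N S D) * ?q ^ (N - code_dim D) = ?q ^ (N - code_dim S)"
    using dim_coset_states[OF duals] unfolding css_code_def
    by (simp add: card_linear_code[OF linear_code_dual] code_dim_dual[OF D] code_dim_dual[OF S])
  also have "?q ^ (N - code_dim S) = ?q ^ (code_dim D - code_dim S) * ?q ^ (N - code_dim D)"
    using dims by (simp flip: power_add)
  finally have "vector_space.dim cscale (css_code N S D) = ?q ^ (code_dim D - code_dim S)"
    by simp
  moreover have "css_code N S D \<subseteq> hspace N"
    using dual_subset_words by (force simp: css_code_def coset_states_def hspace_def)
  moreover have "module.subspace cscale (css_code N S D)"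
    unfolding css_code_def coset_states_eq_block_constant_functions[OF duals]
    by (rule subspace_block_constant_functions)
  ultimately show ?thesis
    unfolding is_AQECC_def using css_code_corrects[OF S D dz dx] by blast
qed

theorem theorem9:
  fixes C1 C2 C3 C4 :: "(nat \<Rightarrow> 'a::{finite,field}) set"
    and n k1 k2 k3 k4 d1 d2 d3 d4 :: nat
  assumes "linear_code n C1" "code_dim C1 = k1" "min_dist C1 = d1"
      and "linear_code n C2" "code_dim C2 = k2" "min_dist C2 = d2"
      and "C2 \<subset> C1"
      and "linear_code n C3" "code_dim C3 = k3" "min_dist C3 = d3"
      and "linear_code n C4" "code_dim C4 = k4" "min_dist C4 = d4"
      and "C4 \<subset> C3"
  shows "\<exists>(Q :: ((nat \<Rightarrow> 'a) \<Rightarrow> complex) set) dz dx. is_AQECC (2 * n) ((k1 - k2) + (k3 - k4)) dz dx Q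
           \<and> dz \<ge> min (2 * d1) d3
           \<and> dx \<ge> min (2 * min_dist (dual n C4)) (min_dist (dual n C2))"
proof -
  let ?D = "plotkin_code n C1 C3" and ?S = "plotkin_code n C2 C4"
  have D: "linear_code (n + n) ?D" and S: "linear_code (n + n) ?S"
    using assms(1,4,8,11) by (simp_all add: linear_code_plotkin_code)
  have "?S \<subseteq> ?D" using assms(7,14) by (intro plotkin_code_mono) auto
  have "k2 \<le> k1" "k4 \<le> k3"
    using code_dim_mono[of n C1 C2] code_dim_mono[of n C3 C4] assms by auto
  then have "code_dim ?D - code_dim ?S = (k1 - k2) + (k3 - k4)"
    using code_dim_plotkin_code[OF assms(1,8)] code_dim_plotkin_code[OF assms(4,11)] assms(2,5,9,12)
    by simp
  moreover have "min (2 * d1) d3 \<le> wt b" if "b \<in> ?D" "b \<notin> ?S" for b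
    using wt_plotkin_code[OF assms(1,8) that(1)] that(2) linear_code_zero[OF S] assms(3,10) by auto
  moreover have "min (2 * min_dist (dual n C4)) (min_dist (dual n C2)) \<le> wt a"
    if "a \<in> dual (n + n) ?S" "a \<notin> dual (n + n) ?D" for a
    using wt_dual_plotkin_code[OF assms(4,11) that(1)] that(2) linear_code_zero[OF linear_code_dual] by auto
  ultimately have "is_AQECC (n + n) ((k1 - k2) + (k3 - k4)) (min (2 * d1) d3)
      (min (2 * min_dist (dual n C4)) (min_dist (dual n C2))) (css_code (n + n) ?S ?D)"
    using css_code_is_AQECC[OF S D \<open>?S \<subseteq> ?D\<close>] by metis
  then show ?thesis by (auto simp: mult_2)
qed

end
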